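(* Let $N\ge2$, let $\mathbf{A}\in\mathbb{R}^{q\times N}$ with $q<N$ have full row rank, let $\vec u\in\mathbb{R}^N$, $b=\mathbf{A}\vec u$, let $m<M$, $\alpha>0$, $\gamma>0$, $\lambda\in(0,2]$, and assume $\Lambda_1\cap\Lambda_2\ne\emptyset$ where $\Lambda_1=\{\vec x:\mathbf{A}\vec x=b\}$, $\Lambda_2=\{\vec x: m\le x_i\le M\ \forall i\}$. Let $\vec x^\ast$ be the unique minimizer of $\frac{\alpha}{2}\|\vec x-\vec u\|_2^2$ over $\Lambda_1\cap\Lambda_2$, let $i_1,\dots,i_r$ be the indices $j$ with $x^\ast_j\in\{m,M\}$, and let $\mathbf{B}=[\vec e_{i_1},\dots,\vec e_{i_r}]^{\mathsf T}\in\mathbb{R}^{r\times N}$ be the corresponding selector matrix ($\vec e_i$ the standard basis of $\mathbb{R}^N$). Let $\mathcal Q=Q_1\times\cdots\times Q_N$ with $Q_i=[M,+\infty)$ if $x_i^\ast=M$, $Q_i=(m,M)$ if $x^\ast_i\in(m,M)$, $Q_i=(-\infty,m]$ if $x^\ast_i=m$. Let $\mathrm{T}_\gamma=\frac{\lambda}{\gamma\alpha+1}\mathrm{P}\circ(2\mathrm{S}-\mathrm{I})+(\mathrm{I}-\lambda\mathrm{S})+\frac{\lambda\gamma\alpha}{\gamma\alpha+1}\vec u$, with $\mathrm{P}(\vec x)=\mathbf{A}^+(b-\mathbf{A}\vec x)+\vec x$, $\mathbf{A}^+=\mathbf{A}^{\mathsf T}(\mathbf{A}\mathbf{A}^{\mathsf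 T})^{-1}$, $[\mathrm{S}(\vec x)]_i=\min(\max(x_i,m),M)$. Then for any $\vec y$ in the interior of $\mathcal Q$ and any fixed point $\vec y^\ast$ of $\mathrm{T}_\gamma$ lying in the interior of $\mathcal Q$, $$\mathrm{T}_\gamma(\vec y)-\mathrm{T}_\gamma(\vec y^\ast)=\mathbf{T}_{c,\lambda}(\vec y-\vec y^\ast),$$ where $c=\frac{1}{\gamma\alpha+1}\in(0,1)$ and $$\mathbf{T}_{c,\lambda}=\lambda\Big(c(\mathbf{I}_N-\mathbf{A}^+\mathbf{A})(\mathbf{I}_N-\mathbf{B}^+\mathbf{B})+c\,\mathbf{A}^+\mathbf{A}\mathbf{B}^+\mathbf{B}+(1-c)\mathbf{B}^+\mathbf{B}\Big)+(1-\lambda)\mathbf{I}_N,$$ with $\mathbf{B}^+=\mathbf{B}^{\mathsf T}(\mathbf{B}\mathbf{B}^{\mathsf T})^{-1}$ (so $\mathbf{B}^+\mathbf{B}$ is the orthogonal projection onto $\mathrm{span}\{\vec e_{i_1},\dots,\vec e_{i_r}\}$, and is $0$ if $r=0$).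
   Context: $\mathbf{I}_N$ is the $N\times N$ identity matrix; $\mathrm{I}$ the identity operator. $\mathrm{T}_\gamma$ is the iteration operator of the generalized Douglas--Rachford splitting for minimizing $f+g$ with $f=\frac{\alpha}{2}\|\cdot-\vec u\|_2^2+\iota_{\Lambda_1}$ and $g=\iota_{\Lambda_2}$ ($\iota$ denoting indicator functions). *)

theory Defs
  imports "HOL-Analysis.Analysis"
begin

definition rpinv :: "real^'n^'q \<Rightarrow> real^'q^'n" where
  "rpinv A = transpose A ** matrix_inv (A ** transpose A)"

definition clip :: "real \<Rightarrow> real \<Rightarrow> real^'n \<Rightarrow> real^'n" where
  "clip m M x = (\<chi> i. min (max (x$i) m) M)"

definition projA :: "real^'n^'q \<Rightarrow> real^'q \<Rightarrow> real^'n \<Rightarrow> real^'n" where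
  "projA A b x = rpinv A *v (b - A *v x) + x"

definition T_gamma :: "real^'n^'q \<Rightarrow> real^'n \<Rightarrow> real \<Rightarrow> real \<Rightarrow> real \<Rightarrow> real \<Rightarrow> real
    \<Rightarrow> real^'n \<Rightarrow> real^'n" where
  "T_gamma A u m M \<alpha> \<gamma> lam y =
     (lam / (\<gamma> * \<alpha> + 1)) *\<^sub>R projA A (A *v u) (2 *\<^sub>R clip m M y - y)
     + (y - lam *\<^sub>R clip m M y)
     + (lam * \<gamma> * \<alpha> / (\<gamma> * \<alpha> + 1)) *\<^sub>R u"

definition active :: "real \<Rightarrow> real \<Rightarrow> real^'n \<Rightarrow> 'n set" where
  "active m M xs = {j. xs$j = m \<or> xs$j = M}"

text \<open>B^+ B for the selector matrix B = [e_{i_1},...,e_{i_r}]^T of the active indices: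
  the orthogonal projection onto span{e_i : i active} (diagonal 0/1 matrix; 0 if r = 0).\<close>
definition selproj :: "'n set \<Rightarrow> real^'n^'n" where
  "selproj I = (\<chi> i j. if i = j \<and> i \<in> I then 1 else 0)"

definition Qbox :: "real \<Rightarrow> real \<Rightarrow> real^'n \<Rightarrow> (real^'n) set" where
  "Qbox m M xs = {y. \<forall>i.
      (xs$i = M \<longrightarrow> y$i \<in> {M..}) \<and>
      (m < xs$i \<and> xs$i < M \<longrightarrow> y$i \<in> {m<..<M}) \<and>
      (xs$i = m \<longrightarrow> y$i \<in> {..m})}"

definition Tmat :: "real^'n^'q \<Rightarrow> real^'n^'n \<Rightarrow> real \<Rightarrow> real \<Rightarrow> real^'n^'n" where
  "Tmat A BB c lam =
     lam *\<^sub>R (c *\<^sub>R ((mat 1 - rpinv A ** A) ** (mat 1 - BB))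
            + c *\<^sub>R (rpinv A ** A ** BB)
            + (1 - c) *\<^sub>R BB)
     + (1 - lam) *\<^sub>R mat 1"

end

theory Submission
  imports Defs
begin

text \<open>On \<open>Q\<close> the clipping \<open>S\<close> fixes every inactive coordinate and pins every active one to
  the corresponding bound \<open>m\<close> or \<open>M\<close>, so \<open>S\<close> is affine there with linear part
  \<open>I - B\<^sup>+B\<close>. The map \<open>P\<close> is affine with linear part \<open>I - A\<^sup>+A\<close>. Hence \<open>T\<^sub>\<gamma>\<close> is affine on \<open>Q\<close>,
  and expanding its linear part gives \<open>T\<^sub>c\<^sub>,\<^sub>\<lambda>\<close>.\<close>

lemma selproj_mult_vec: "selproj I *v v = (\<chi> i. if i \<in> I then v$i else 0)"
  unfolding selproj_def matrix_vector_mult_def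
  by (simp add: vec_eq_iff if_distrib[of "\<lambda>t. t * _"] sum.delta cong: if_cong)

lemma clip_on_Qbox:
  assumes "m < M" and "\<forall>i. m \<le> xs$i \<and> xs$i \<le> M" and "y \<in> Qbox m M xs"
  shows "clip m M y = (\<chi> i. if i \<in> active m M xs then xs$i else y$i)"
proof -
  have "min (max (y$i) m) M = (if i \<in> active m M xs then xs$i else y$i)" for i
  proof -
    have "m \<le> xs$i" "xs$i \<le> M" using assms(2) by auto
    moreover have "(xs$i = M \<longrightarrow> y$i \<in> {M..}) \<and>
      (m < xs$i \<and> xs$i < M \<longrightarrow> y$i \<in> {m<..<M}) \<and> (xs$i = m \<longrightarrow> y$i \<in> {..m})"
      using assms(3) unfolding Qbox_def by blast
    ultimately show ?thesis
      using \<open>m < M\<close> unfolding active_def by (cases "xs$i = m"; cases "xs$i = M") auto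
  qed
  then show ?thesis unfolding clip_def by (simp add: vec_eq_iff)
qed

lemma clip_diff_on_Qbox:
  assumes "m < M" and "\<forall>i. m \<le> xs$i \<and> xs$i \<le> M"
    and "y \<in> Qbox m M xs" and "z \<in> Qbox m M xs"
  shows "clip m M y - clip m M z = (mat 1 - selproj (active m M xs)) *v (y - z)"
  using clip_on_Qbox[OF assms(1,2,3)] clip_on_Qbox[OF assms(1,2,4)]
  by (simp add: vec_eq_iff selproj_mult_vec matrix_vector_mult_diff_rdistrib)

lemma projA_diff: "projA A b x - projA A b x' = (mat 1 - rpinv A ** A) *v (x - x')"
  unfolding projA_def
  by (simp add: matrix_vector_mul_assoc[symmetric] matrix_vector_mult_diff_distrib
      matrix_vector_mult_diff_rdistrib algebra_simps)

lemma T_gamma_diff: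
  "T_gamma A u m M \<alpha> \<gamma> lam y - T_gamma A u m M \<alpha> \<gamma> lam z
     = (lam / (\<gamma> * \<alpha> + 1)) *\<^sub>R ((mat 1 - rpinv A ** A)
          *v (2 *\<^sub>R (clip m M y - clip m M z) - (y - z)))
       + (y - z) - lam *\<^sub>R (clip m M y - clip m M z)"
proof -
  have "(2 *\<^sub>R clip m M y - y) - (2 *\<^sub>R clip m M z - z)
      = 2 *\<^sub>R (clip m M y - clip m M z) - (y - z)"
    by (simp add: algebra_simps)
  moreover have "T_gamma A u m M \<alpha> \<gamma> lam y - T_gamma A u m M \<alpha> \<gamma> lam z
      = (lam / (\<gamma> * \<alpha> + 1)) *\<^sub>R (projA A (A *v u) (2 *\<^sub>R clip m M y - y)
          - projA A (A *v u) (2 *\<^sub>R clip m M z - z))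
        + (y - z) - lam *\<^sub>R (clip m M y - clip m M z)"
    unfolding T_gamma_def by (simp add: algebra_simps)
  ultimately show ?thesis
    by (simp only: projA_diff)
qed

lemma Tmat_mult_vec:
  fixes A :: "real^'n^'q" and E :: "real^'n^'n"
  shows "Tmat A E c lam *v d
    = (lam * c) *\<^sub>R ((mat 1 - rpinv A ** A) *v (2 *\<^sub>R ((mat 1 - E) *v d) - d))
      + d - lam *\<^sub>R ((mat 1 - E) *v d)"
  unfolding Tmat_def
  by (simp add: matrix_vector_mult_add_rdistrib matrix_vector_mult_diff_rdistrib
      scaleR_matrix_vector_assoc[symmetric] matrix_vector_mul_assoc[symmetric]
      matrix_vector_mult_diff_distrib matrix_vector_mult_scaleR algebra_simps vec_eq_iff)

lemma T_gamma_diff_on_Qbox: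
  assumes "m < M" and "\<forall>i. m \<le> xs$i \<and> xs$i \<le> M"
    and "y \<in> Qbox m M xs" and "z \<in> Qbox m M xs"
  shows "T_gamma A u m M \<alpha> \<gamma> lam y - T_gamma A u m M \<alpha> \<gamma> lam z
           = Tmat A (selproj (active m M xs)) (1 / (\<gamma> * \<alpha> + 1)) lam *v (y - z)"
  unfolding T_gamma_diff Tmat_mult_vec clip_diff_on_Qbox[OF assms, symmetric]
  by simp

theorem lemma2p2:
  fixes A :: "real^'n^'q" and u xs :: "real^'n"
    and m M \<alpha> \<gamma> lam :: real
  assumes N2: "CARD('n) \<ge> 2"
    and qN: "CARD('q) < CARD('n)"
    and fullrank: "rank A = CARD('q)"
    and mM: "m < M" and alpha: "\<alpha> > 0" and gamma: "\<gamma> > 0"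
    and lam: "0 < lam" "lam \<le> 2"
    and nonempty: "{x. A *v x = A *v u} \<inter> {x. \<forall>i. m \<le> x$i \<and> x$i \<le> M} \<noteq> {}"
    and xs_feas: "xs \<in> {x. A *v x = A *v u} \<inter> {x. \<forall>i. m \<le> x$i \<and> x$i \<le> M}"
    and xs_min: "\<forall>x \<in> {x. A *v x = A *v u} \<inter> {x. \<forall>i. m \<le> x$i \<and> x$i \<le> M}.
                   \<alpha> / 2 * (norm (xs - u))\<^sup>2 \<le> \<alpha> / 2 * (norm (x - u))\<^sup>2"
  shows "\<forall>y ystar. y \<in> interior (Qbox m M xs) \<longrightarrow> ystar \<in> interior (Qbox m M xs) \<longrightarrow>
           T_gamma A u m M \<alpha> \<gamma> lam ystar = ystar \<longrightarrow>
           (let c = 1 / (\<gamma> * \<alpha> + 1) in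
              c \<in> {0<..<1} \<and>
              T_gamma A u m M \<alpha> \<gamma> lam y - T_gamma A u m M \<alpha> \<gamma> lam ystar
                = Tmat A (selproj (active m M xs)) c lam *v (y - ystar))"
proof (intro allI impI)
  fix y ystar
  assume "y \<in> interior (Qbox m M xs)" and "ystar \<in> interior (Qbox m M xs)"
  then have "y \<in> Qbox m M xs" and "ystar \<in> Qbox m M xs"
    using interior_subset by auto
  moreover have "\<forall>i. m \<le> xs$i \<and> xs$i \<le> M"
    using xs_feas by auto
  moreover have "1 / (\<gamma> * \<alpha> + 1) \<in> {0<..<1::real}"
    using mult_pos_pos[OF gamma alpha] by simp
  ultimately show "let c = 1 / (\<gamma> * \<alpha> + 1) in
      c \<in> {0<..<1} \<and>
      T_gamma A u m M \<alpha> \<gamma> lam y - T_gamma A u m M \<alpha> \<gamma> lam ystar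
        = Tmat A (selproj (active m M xs)) c lam *v (y - ystar)"
    using T_gamma_diff_on_Qbox[OF mM] by (simp add: Let_def)
qed

end
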